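(* Let $\mathcal X$ be a measurable space equipped with a data distribution $p_{\text{data}}$, let $d,n\ge 1$ be integers, and let $\phi_1,\ldots,\phi_n:\mathcal X\to[0,1]^d$ and $q=(q_1,\ldots,q_n):\mathcal X\to[0,1]^n$ be measurable maps with $\sum_{i=1}^n q_i(x)=1$ for every $x\in\mathcal X$. Let $\mathcal Z=[0,1]^d\times\{1,\ldots,n\}$ and let $p$ be the distribution on $\mathcal Z$ given by $$p(z,j)=\mathbb E_{x\sim p_{\text{data}}}\, q_j(x)\,\mathbb 1_{\phi_j(x)}(z),$$ i.e. for any bounded measurable $f:\mathcal Z\to\mathbb R$, $\mathbb E_{(z,i)\sim p} f(z,i)=\mathbb E_{x\sim p_{\text{data}}}\sum_{i=1}^n q_i(x) f(\phi_i(x),i)$. Let $\mathcal U_{\mathcal Z}$ be the uniform distribution on $\mathcal Z$ (uniform on $[0,1]^d$ times uniform on $\{1,\dots,n\}$). Let $k_0(x,y)=\frac{d/6}{d/6+|\sigma^{-1}(x)-\sigma^{-1}(y)|^2}$ (with $\sigma^{-1}$ the coordinatewise logit, the inverse of the sigmoid), and let $k_{\mathcal Z}((z_1,i),(z_2,j))=\delta_{ij}k_0(z_1,z_2)$. For $N\ge 2$, let $x_1,\ldots,x_N$ be a random sample drawn from $p_{\text{data}}$ and $w_1,\ldots,w_N$ a random sample drawn uniformly from $[0,1]^d$, all independent. Then the quantity $$\ell_{\mathcal Z}(q,\phi_1,\ldots,\phi_n)=\frac{1}{N(N-1)}\sum_{\substack{j,k=1\\ j\ne k}}^N\sum_{i=1}^n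 q_i(x_j)q_i(x_k)k_0(\phi_i(x_j),\phi_i(x_k)) - \frac{2}{nN^2}\sum_{j,k=1}^N\sum_{i=1}^n q_i(x_j)k_0(\phi_i(x_j),w_k) + \frac{1}{nN(N-1)}\sum_{\substack{j,k=1\\ j\ne k}}^N k_0(w_j,w_k)$$ is an estimator of $\operatorname{MMD}_{k_{\mathcal Z}}(p,\mathcal U_{\mathcal Z})^2$, in the sense that its expectation over the samples equals $\operatorname{MMD}_{k_{\mathcal Z}}(p,\mathcal U_{\mathcal Z})^2$.
   Context: For distributions $P,Q$ on a common space and a kernel $k$, the maximal mean discrepancy is defined by $\operatorname{MMD}_k(P,Q)^2=\mathbb E_{y_1,y_2\sim P\times P}k(y_1,y_2)-2\,\mathbb E_{y_1,y_2\sim P\times Q}k(y_1,y_2)+\mathbb E_{y_1,y_2\sim Q\times Q}k(y_1,y_2)$, where $y_1,y_2$ are independent. $\mathbb 1_y$ denotes the point mass at $y$, and $\delta_{ij}$ is the Kronecker delta. Points of $[0,1]^d$ on the boundary, where the logit is infinite, are understood to have measure zero or $k_0$ extended by continuity; $k_0$ takes values in $[0,1]$. *)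

theory Defs
  imports "HOL-Probability.Probability"
begin

text \<open>Logit (inverse sigmoid) on (0,1); at the boundary Isabelle's conventions
  (ln 0 = 0, x/0 = 0) give some finite value, so k0 remains a measurable kernel
  with values in [0,1] (boundary convention of the paper).\<close>
definition logit :: "real \<Rightarrow> real" where
  "logit t = ln (t / (1 - t))"

definition k0 :: "real^'d \<Rightarrow> real^'d \<Rightarrow> real" where
  "k0 x y = (real CARD('d) / 6) /
      (real CARD('d) / 6 + (\<Sum>c\<in>UNIV. (logit (x$c) - logit (y$c))^2))"

definition kZ :: "((real^'d) \<times> nat) \<Rightarrow> ((real^'d) \<times> nat) \<Rightarrow> real" where
  "kZ u v = (if snd u = snd v then k0 (fst u) (fst v) else 0)"

definition MMD2 :: "('z \<Rightarrow> 'z \<Rightarrow> real) \<Rightarrow> 'z measure \<Rightarrow> 'z measure \<Rightarrow> real" where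
  "MMD2 k P Q =
     (\<integral>y. k (fst y) (snd y) \<partial>(P \<Otimes>\<^sub>M P))
     - 2 * (\<integral>y. k (fst y) (snd y) \<partial>(P \<Otimes>\<^sub>M Q))
     + (\<integral>y. k (fst y) (snd y) \<partial>(Q \<Otimes>\<^sub>M Q))"

definition unit_cube :: "(real^'d) set" where
  "unit_cube = {z. \<forall>c. 0 \<le> z$c \<and> z$c \<le> 1}"

definition unif_cube :: "(real^'d) measure" where
  "unif_cube = uniform_measure lborel unit_cube"

definition unif_Z :: "nat \<Rightarrow> ((real^'d) \<times> nat) measure" where
  "unif_Z n = unif_cube \<Otimes>\<^sub>M uniform_measure (count_space UNIV) {1..n}"

definition p_Z :: "'a measure \<Rightarrow> nat \<Rightarrow> (nat \<Rightarrow> 'a \<Rightarrow> real) \<Rightarrow> (nat \<Rightarrow> 'a \<Rightarrow> real^'d)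
    \<Rightarrow> ((real^'d) \<times> nat) measure" where
  "p_Z M n q \<phi> = measure_of UNIV (sets (borel \<Otimes>\<^sub>M count_space UNIV))
     (\<lambda>A. \<integral>\<^sup>+x. (\<Sum>i\<in>{1..n}. ennreal (q i x) * indicator A (\<phi> i x, i)) \<partial>M)"

definition ell_Z :: "nat \<Rightarrow> nat \<Rightarrow> (nat \<Rightarrow> 'a \<Rightarrow> real) \<Rightarrow> (nat \<Rightarrow> 'a \<Rightarrow> real^'d)
    \<Rightarrow> (nat \<Rightarrow> 'a) \<Rightarrow> (nat \<Rightarrow> real^'d) \<Rightarrow> real" where
  "ell_Z n N q \<phi> xs ws =
     1 / (real N * (real N - 1)) *
       (\<Sum>j\<in>{1..N}. \<Sum>k\<in>{1..N}-{j}. \<Sum>i\<in>{1..n}.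
          q i (xs j) * q i (xs k) * k0 (\<phi> i (xs j)) (\<phi> i (xs k)))
   - 2 / (real n * real N ^ 2) *
       (\<Sum>j\<in>{1..N}. \<Sum>k\<in>{1..N}. \<Sum>i\<in>{1..n}.
          q i (xs j) * k0 (\<phi> i (xs j)) (ws k))
   + 1 / (real n * real N * (real N - 1)) *
       (\<Sum>j\<in>{1..N}. \<Sum>k\<in>{1..N}-{j}. k0 (ws j) (ws k))"

end

theory Submission
  imports Defs
begin

(* Both p and the uniform law on Z are mixtures: draw x from a base probability space,
   then a label i with probability w_i(x), and output (alpha_i(x), i).  For two such
   mixtures, the integral of k_Z against their product reduces to an integral against
   the product of the base spaces, and since k_Z vanishes unless the labels agree, only
   the diagonal i = j survives.  This gives each of the three terms of MMD^2 as a base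
   integral over p_data x p_data, p_data x U or U x U.  On the estimator side, two
   distinct sample coordinates are independent with the corresponding product law, so
   each double sum has expectation (number of index pairs) times the same base
   integral, and the normalising constants of the estimator cancel these counts. *)

lemma measurable_logit [measurable]: "logit \<in> borel_measurable borel"
  unfolding logit_def by measurable

lemma measurable_vec_nth [measurable]: "(\<lambda>x. (x :: real^'n) $ c) \<in> borel_measurable borel"
  by (intro borel_measurable_continuous_onI continuous_intros)

lemma measurable_k0 [measurable]:
  assumes [measurable]: "f \<in> borel_measurable M" "g \<in> borel_measurable M"
  shows "(\<lambda>x. k0 (f x) (g x)) \<in> borel_measurable M"
  unfolding k0_def by measurable

lemma k0_nonneg: "0 \<le> k0 x y"
  unfolding k0_def by (intro divide_nonneg_nonneg add_nonneg_nonneg sum_nonneg) auto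

lemma k0_le_1: "k0 x y \<le> 1"
  unfolding k0_def by (simp add: add_pos_nonneg sum_nonneg)

lemma abs_k0_le_1: "\<bar>k0 x y\<bar> \<le> 1"
  by (simp add: k0_nonneg k0_le_1)

abbreviation borel_Z :: "((real^'d) \<times> nat) measure" where
  "borel_Z \<equiv> borel \<Otimes>\<^sub>M count_space UNIV"

lemma measurable_kZ [measurable]:
  "(\<lambda>y. kZ (fst y) (snd y)) \<in> borel_measurable (borel_Z \<Otimes>\<^sub>M borel_Z)"
proof -
  have "Measurable.pred (borel_Z \<Otimes>\<^sub>M borel_Z) (\<lambda>y. \<exists>i. snd (snd y) = i \<and> snd (fst y) = i)"
    by measurable
  then have [measurable]: "Measurable.pred (borel_Z \<Otimes>\<^sub>M borel_Z) (\<lambda>y. snd (fst y) = snd (snd y))"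
    by simp
  show ?thesis
    unfolding kZ_def by measurable
qed

lemma (in finite_measure) integrable_bounded:
  fixes f :: "'a \<Rightarrow> real"
  assumes "f \<in> borel_measurable M" "\<And>x. x \<in> space M \<Longrightarrow> \<bar>f x\<bar> \<le> c"
  shows "integrable M f"
  using assms by (intro integrable_const_bound[where B=c]) auto

lemma (in prob_space) abs_integral_le_bound:
  fixes f :: "'a \<Rightarrow> real"
  assumes "f \<in> borel_measurable M" "\<And>x. x \<in> space M \<Longrightarrow> \<bar>f x\<bar> \<le> c"
  shows "\<bar>\<integral>x. f x \<partial>M\<bar> \<le> c"
proof -
  have "\<bar>\<integral>x. f x \<partial>M\<bar> \<le> (\<integral>x. \<bar>f x\<bar> \<partial>M)"
    by (rule integral_abs_bound)
  also have "\<dots> \<le> c"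
    using assms by (intro integral_le_const integrable_abs integrable_bounded) auto
  finally show ?thesis .
qed

lemma integral_pair_measure_bounded:
  fixes F :: "'a \<times> 'b \<Rightarrow> real"
  assumes "finite_measure A" "finite_measure B"
    and "F \<in> borel_measurable (A \<Otimes>\<^sub>M B)" "\<And>z. z \<in> space (A \<Otimes>\<^sub>M B) \<Longrightarrow> \<bar>F z\<bar> \<le> c"
  shows "(\<integral>z. F z \<partial>(A \<Otimes>\<^sub>M B)) = (\<integral>x. (\<integral>y. F (x, y) \<partial>B) \<partial>A)"
proof -
  interpret A: finite_measure A by fact
  interpret B: finite_measure B by fact
  interpret AB: pair_sigma_finite A B ..
  interpret finite_measure "A \<Otimes>\<^sub>M B"
    by (rule finite_measure_pair_measure) fact+
  show ?thesis
    using assms(3,4) by (intro AB.integral_fst'[symmetric] integrable_bounded)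
qed

lemma integral_measure_preserving:
  fixes h :: "'b \<Rightarrow> real"
  assumes "g \<in> measurable M N" "distr M N g = N" "integrable N h"
  shows "integrable M (\<lambda>x. h (g x))" and "(\<integral>x. h (g x) \<partial>M) = (\<integral>y. h y \<partial>N)"
proof -
  have "h \<in> borel_measurable N"
    using assms(3) by (rule borel_measurable_integrable)
  then show "integrable M (\<lambda>x. h (g x))" "(\<integral>x. h (g x) \<partial>M) = (\<integral>y. h y \<partial>N)"
    using assms integrable_distr_eq[of g M N h] integral_distr[of g M N h] by simp_all
qed

lemma (in prob_space) distr_pair_snd:
  assumes "sigma_finite_measure N"
  shows "distr (M \<Otimes>\<^sub>M N) N snd = N"
proof (intro measure_eqI)
  interpret N: sigma_finite_measure N by fact
  fix A assume A: "A \<in> sets (distr (M \<Otimes>\<^sub>M N) N snd)"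
  then have "emeasure (distr (M \<Otimes>\<^sub>M N) N snd) A = emeasure (M \<Otimes>\<^sub>M N) (space M \<times> A)"
    by (auto simp: emeasure_distr space_pair_measure dest: sets.sets_into_space
        intro!: arg_cong2[where f=emeasure])
  with A show "emeasure (distr (M \<Otimes>\<^sub>M N) N snd) A = emeasure N A"
    by (simp add: N.emeasure_pair_measure_Times emeasure_space_1)
qed simp

lemma (in prob_space) integral_pair_fst:
  fixes f :: "'b \<Rightarrow> real"
  assumes "integrable N f"
  shows "integrable (N \<Otimes>\<^sub>M M) (\<lambda>s. f (fst s))" and "(\<integral>s. f (fst s) \<partial>(N \<Otimes>\<^sub>M M)) = (\<integral>x. f x \<partial>N)"
  using integral_measure_preserving[OF measurable_fst distr_pair_fst assms] by simp_all

lemma (in prob_space) integral_pair_snd: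
  fixes f :: "'b \<Rightarrow> real"
  assumes "prob_space N" "integrable N f"
  shows "integrable (M \<Otimes>\<^sub>M N) (\<lambda>s. f (snd s))" and "(\<integral>s. f (snd s) \<partial>(M \<Otimes>\<^sub>M N)) = (\<integral>x. f x \<partial>N)"
  using integral_measure_preserving[OF measurable_snd distr_pair_snd assms(2)]
    prob_space_imp_sigma_finite[OF assms(1)] by simp_all

lemma integral_double_sum_const:
  fixes f :: "'i \<Rightarrow> 'j \<Rightarrow> 'a \<Rightarrow> real"
  assumes "finite I" "\<And>j. j \<in> I \<Longrightarrow> finite (K j)"
    and "\<And>j k. j \<in> I \<Longrightarrow> k \<in> K j \<Longrightarrow> integrable M (f j k)"
    and "\<And>j k. j \<in> I \<Longrightarrow> k \<in> K j \<Longrightarrow> integral\<^sup>L M (f j k) = c"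
  shows "integrable M (\<lambda>x. \<Sum>j\<in>I. \<Sum>k\<in>K j. f j k x)"
    and "(\<integral>x. (\<Sum>j\<in>I. \<Sum>k\<in>K j. f j k x) \<partial>M) = (\<Sum>j\<in>I. real (card (K j))) * c"
proof -
  show "integrable M (\<lambda>x. \<Sum>j\<in>I. \<Sum>k\<in>K j. f j k x)"
    using assms by (intro Bochner_Integration.integrable_sum) auto
  have "(\<integral>x. (\<Sum>j\<in>I. \<Sum>k\<in>K j. f j k x) \<partial>M) = (\<Sum>j\<in>I. \<Sum>k\<in>K j. integral\<^sup>L M (f j k))"
    using assms by (simp add: Bochner_Integration.integral_sum)
  also have "\<dots> = (\<Sum>j\<in>I. \<Sum>k\<in>K j. c)"
    using assms(4) by (intro sum.cong) auto
  finally show "(\<integral>x. (\<Sum>j\<in>I. \<Sum>k\<in>K j. f j k x) \<partial>M) = (\<Sum>j\<in>I. real (card (K j))) * c"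
    by (simp add: sum_distrib_right)
qed

lemma distr_PiM_pair_components:
  assumes M: "prob_space M" and I: "finite I" "j \<in> I" "k \<in> I" "j \<noteq> k"
  shows "distr (PiM I (\<lambda>_. M)) (M \<Otimes>\<^sub>M M) (\<lambda>\<omega>. (\<omega> j, \<omega> k)) = M \<Otimes>\<^sub>M M"
proof (rule pair_measure_eqI[symmetric])
  interpret prob_space M by (rule M)
  show "sigma_finite_measure M" by unfold_locales
  then show "sigma_finite_measure M" .
  show "sets (M \<Otimes>\<^sub>M M) = sets (distr (PiM I (\<lambda>_. M)) (M \<Otimes>\<^sub>M M) (\<lambda>\<omega>. (\<omega> j, \<omega> k)))"
    by simp
  have meas: "(\<lambda>\<omega>. (\<omega> j, \<omega> k)) \<in> measurable (PiM I (\<lambda>_. M)) (M \<Otimes>\<^sub>M M)"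
    using I by (intro measurable_Pair measurable_component_singleton) auto
  fix A B assume A: "A \<in> sets M" and B: "B \<in> sets M"
  have "(\<lambda>\<omega>. (\<omega> j, \<omega> k)) -` (A \<times> B) \<inter> space (PiM I (\<lambda>_. M))
      = prod_emb I (\<lambda>_. M) {j, k} (Pi\<^sub>E {j, k} (\<lambda>i. if i = j then A else B))"
    using I unfolding prod_emb_def space_PiM by (auto simp: PiE_iff)
  then have "emeasure (distr (PiM I (\<lambda>_. M)) (M \<Otimes>\<^sub>M M) (\<lambda>\<omega>. (\<omega> j, \<omega> k))) (A \<times> B)
      = emeasure (PiM I (\<lambda>_. M)) (prod_emb I (\<lambda>_. M) {j, k} (Pi\<^sub>E {j, k} (\<lambda>i. if i = j then A else B)))"
    using meas A B by (simp add: emeasure_distr)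
  also have "\<dots> = (\<Prod>i\<in>{j,k}. emeasure M (if i = j then A else B))"
    using I A B M by (intro emeasure_PiM_emb) auto
  finally show "emeasure M A * emeasure M B
      = emeasure (distr (PiM I (\<lambda>_. M)) (M \<Otimes>\<^sub>M M) (\<lambda>\<omega>. (\<omega> j, \<omega> k))) (A \<times> B)"
    using I by simp
qed

lemma integral_PiM_offdiag_sum:
  assumes M: "prob_space M" and I: "finite I" and h: "integrable (M \<Otimes>\<^sub>M M) h"
  shows "integrable (PiM I (\<lambda>_. M)) (\<lambda>\<omega>. \<Sum>j\<in>I. \<Sum>k\<in>I-{j}. h (\<omega> j, \<omega> k))"
    and "(\<integral>\<omega>. (\<Sum>j\<in>I. \<Sum>k\<in>I-{j}. h (\<omega> j, \<omega> k)) \<partial>PiM I (\<lambda>_. M))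
           = real (card I) * (real (card I) - 1) * (\<integral>z. h z \<partial>(M \<Otimes>\<^sub>M M))"
proof -
  have meas: "(\<lambda>\<omega>. (\<omega> j, \<omega> k)) \<in> measurable (PiM I (\<lambda>_. M)) (M \<Otimes>\<^sub>M M)"
    if "j \<in> I" "k \<in> I" for j k
    using that by (intro measurable_Pair measurable_component_singleton)
  have pair: "integrable (PiM I (\<lambda>_. M)) (\<lambda>\<omega>. h (\<omega> j, \<omega> k))"
      "(\<integral>\<omega>. h (\<omega> j, \<omega> k) \<partial>PiM I (\<lambda>_. M)) = (\<integral>z. h z \<partial>(M \<Otimes>\<^sub>M M))"
    if "j \<in> I" "k \<in> I - {j}" for j k
    using integral_measure_preserving[OF meas distr_PiM_pair_components[OF M I] h] that by auto
  have card: "(\<Sum>j\<in>I. real (card (I - {j}))) = real (card I) * (real (card I) - 1)"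
  proof -
    have "real (card (I - {j})) = real (card I) - 1" if "j \<in> I" for j
      using that I card_gt_0_iff[of I] by (auto simp: card_Diff_singleton)
    then show ?thesis by simp
  qed
  show "integrable (PiM I (\<lambda>_. M)) (\<lambda>\<omega>. \<Sum>j\<in>I. \<Sum>k\<in>I-{j}. h (\<omega> j, \<omega> k))"
    using I pair by (intro integral_double_sum_const(1)[where f="\<lambda>j k \<omega>. h (\<omega> j, \<omega> k)"]) auto
  show "(\<integral>\<omega>. (\<Sum>j\<in>I. \<Sum>k\<in>I-{j}. h (\<omega> j, \<omega> k)) \<partial>PiM I (\<lambda>_. M))
      = real (card I) * (real (card I) - 1) * (\<integral>z. h z \<partial>(M \<Otimes>\<^sub>M M))"
    unfolding card[symmetric] using I pair
    by (intro integral_double_sum_const(2)[where f="\<lambda>j k \<omega>. h (\<omega> j, \<omega> k)"]) auto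
qed

lemma distr_PiM_PiM_components:
  assumes "prob_space M" "prob_space U" "j \<in> I" "k \<in> J"
  shows "distr (PiM I (\<lambda>_. M) \<Otimes>\<^sub>M PiM J (\<lambda>_. U)) (M \<Otimes>\<^sub>M U) (\<lambda>s. (fst s j, snd s k)) = M \<Otimes>\<^sub>M U"
proof -
  interpret PM: product_prob_space "\<lambda>_. M" I by (rule product_prob_spaceI) fact
  interpret PU: product_prob_space "\<lambda>_. U" J by (rule product_prob_spaceI) fact
  have "(\<lambda>\<omega>. \<omega> j) \<in> measurable (PiM I (\<lambda>_. M)) M" "(\<lambda>\<omega>. \<omega> k) \<in> measurable (PiM J (\<lambda>_. U)) U"
    using assms by (auto intro: measurable_component_singleton)
  from pair_measure_distr[OF this] show ?thesis
    using PM.PiM_component[OF \<open>j \<in> I\<close>] PU.PiM_component[OF \<open>k \<in> J\<close>]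
      prob_space_imp_sigma_finite[OF \<open>prob_space U\<close>]
    by (simp add: case_prod_beta')
qed

lemma integral_PiM_PiM_cross_sum:
  assumes M: "prob_space M" and U: "prob_space U" and I: "finite I" and J: "finite J"
    and h: "integrable (M \<Otimes>\<^sub>M U) h"
  shows "integrable (PiM I (\<lambda>_. M) \<Otimes>\<^sub>M PiM J (\<lambda>_. U)) (\<lambda>s. \<Sum>j\<in>I. \<Sum>k\<in>J. h (fst s j, snd s k))"
    and "(\<integral>s. (\<Sum>j\<in>I. \<Sum>k\<in>J. h (fst s j, snd s k)) \<partial>(PiM I (\<lambda>_. M) \<Otimes>\<^sub>M PiM J (\<lambda>_. U)))
           = real (card I) * real (card J) * (\<integral>z. h z \<partial>(M \<Otimes>\<^sub>M U))"
proof -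
  have pair: "integrable (PiM I (\<lambda>_. M) \<Otimes>\<^sub>M PiM J (\<lambda>_. U)) (\<lambda>s. h (fst s j, snd s k))"
      "(\<integral>s. h (fst s j, snd s k) \<partial>(PiM I (\<lambda>_. M) \<Otimes>\<^sub>M PiM J (\<lambda>_. U))) = (\<integral>z. h z \<partial>(M \<Otimes>\<^sub>M U))"
    if "j \<in> I" "k \<in> J" for j k
  proof -
    have "(\<lambda>s. (fst s j, snd s k)) \<in> measurable (PiM I (\<lambda>_. M) \<Otimes>\<^sub>M PiM J (\<lambda>_. U)) (M \<Otimes>\<^sub>M U)"
      using that by (intro measurable_Pair measurable_compose[OF measurable_fst measurable_component_singleton]
          measurable_compose[OF measurable_snd measurable_component_singleton])
    from integral_measure_preserving[OF this distr_PiM_PiM_components[OF M U that] h]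
    show "integrable (PiM I (\<lambda>_. M) \<Otimes>\<^sub>M PiM J (\<lambda>_. U)) (\<lambda>s. h (fst s j, snd s k))"
      "(\<integral>s. h (fst s j, snd s k) \<partial>(PiM I (\<lambda>_. M) \<Otimes>\<^sub>M PiM J (\<lambda>_. U))) = (\<integral>z. h z \<partial>(M \<Otimes>\<^sub>M U))"
      by simp_all
  qed
  show "integrable (PiM I (\<lambda>_. M) \<Otimes>\<^sub>M PiM J (\<lambda>_. U)) (\<lambda>s. \<Sum>j\<in>I. \<Sum>k\<in>J. h (fst s j, snd s k))"
    using I J pair by (intro integral_double_sum_const(1)[where f="\<lambda>j k s. h (fst s j, snd s k)"]) auto
  show "(\<integral>s. (\<Sum>j\<in>I. \<Sum>k\<in>J. h (fst s j, snd s k)) \<partial>(PiM I (\<lambda>_. M) \<Otimes>\<^sub>M PiM J (\<lambda>_. U)))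
      = real (card I) * real (card J) * (\<integral>z. h z \<partial>(M \<Otimes>\<^sub>M U))"
    using I J pair by (subst integral_double_sum_const(2)[where f="\<lambda>j k s. h (fst s j, snd s k)"]) auto
qed

(* P is the law of alpha_i(x), where x is drawn from A and then the index i with
   probability w_i(x); the law is recorded through its integrals of bounded functions. *)
definition mixture_law ::
    "'a measure \<Rightarrow> 'i set \<Rightarrow> ('i \<Rightarrow> 'a \<Rightarrow> real) \<Rightarrow> ('i \<Rightarrow> 'a \<Rightarrow> 'z) \<Rightarrow> 'z measure \<Rightarrow> bool"
  where "mixture_law A I w \<alpha> P \<longleftrightarrow> finite I \<and>
    (\<forall>i\<in>I. w i \<in> borel_measurable A \<and> \<alpha> i \<in> measurable A P \<and> (\<forall>x\<in>space A. 0 \<le> w i x \<and> w i x \<le> 1)) \<and>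
    (\<forall>f c. f \<in> borel_measurable P \<longrightarrow> (\<forall>z\<in>space P. \<bar>f z\<bar> \<le> c) \<longrightarrow>
       (\<integral>z. f z \<partial>P) = (\<integral>x. (\<Sum>i\<in>I. w i x * f (\<alpha> i x)) \<partial>A))"

lemma mixture_lawI:
  assumes "finite I" "\<And>i. i \<in> I \<Longrightarrow> w i \<in> borel_measurable A" "\<And>i. i \<in> I \<Longrightarrow> \<alpha> i \<in> measurable A P"
    and "\<And>i x. i \<in> I \<Longrightarrow> x \<in> space A \<Longrightarrow> 0 \<le> w i x \<and> w i x \<le> 1"
    and "\<And>f c. f \<in> borel_measurable P \<Longrightarrow> (\<And>z. z \<in> space P \<Longrightarrow> \<bar>f z\<bar> \<le> c) \<Longrightarrow>
           (\<integral>z. f z \<partial>P) = (\<integral>x. (\<Sum>i\<in>I. w i x * f (\<alpha> i x)) \<partial>A)"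
  shows "mixture_law A I w \<alpha> P"
  using assms unfolding mixture_law_def by blast

lemma
  assumes "mixture_law A I w \<alpha> P"
  shows mixture_law_finite: "finite I"
    and mixture_law_weight_measurable: "i \<in> I \<Longrightarrow> w i \<in> borel_measurable A"
    and mixture_law_component_measurable: "i \<in> I \<Longrightarrow> \<alpha> i \<in> measurable A P"
    and mixture_law_weight_bounds: "i \<in> I \<Longrightarrow> x \<in> space A \<Longrightarrow> 0 \<le> w i x \<and> w i x \<le> 1"
    and mixture_law_integral: "f \<in> borel_measurable P \<Longrightarrow> (\<And>z. z \<in> space P \<Longrightarrow> \<bar>f z\<bar> \<le> c) \<Longrightarrow>
           (\<integral>z. f z \<partial>P) = (\<integral>x. (\<Sum>i\<in>I. w i x * f (\<alpha> i x)) \<partial>A)"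
  using assms unfolding mixture_law_def by blast+

lemma mixture_law_integrand_bounded:
  assumes "mixture_law A I w \<alpha> P" "x \<in> space A" "\<And>z. z \<in> space P \<Longrightarrow> \<bar>f z\<bar> \<le> c"
  shows "\<bar>\<Sum>i\<in>I. w i x * f (\<alpha> i x)\<bar> \<le> real (card I) * c"
proof -
  have "\<bar>w i x * f (\<alpha> i x)\<bar> \<le> c" if "i \<in> I" for i
  proof -
    have "\<alpha> i x \<in> space P"
      using mixture_law_component_measurable[OF assms(1) that] assms(2) by (rule measurable_space)
    then show ?thesis
      using mixture_law_weight_bounds[OF assms(1) that assms(2)] assms(3)
      by (auto simp: abs_mult intro: order_trans[OF mult_left_le_one_le])
  qed
  then have "\<bar>\<Sum>i\<in>I. w i x * f (\<alpha> i x)\<bar> \<le> (\<Sum>i\<in>I. c)"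
    by (intro order_trans[OF sum_abs sum_mono])
  then show ?thesis by simp
qed

lemma mixture_law_integrable:
  assumes mix: "mixture_law A I w \<alpha> P" and "finite_measure A"
    and f: "f \<in> borel_measurable P" "\<And>z. z \<in> space P \<Longrightarrow> \<bar>f z\<bar> \<le> c"
  shows "integrable A (\<lambda>x. \<Sum>i\<in>I. w i x * f (\<alpha> i x))"
proof (rule finite_measure.integrable_bounded[OF \<open>finite_measure A\<close>])
  show "(\<lambda>x. \<Sum>i\<in>I. w i x * f (\<alpha> i x)) \<in> borel_measurable A"
    using mixture_law_weight_measurable[OF mix] measurable_compose[OF mixture_law_component_measurable[OF mix] f(1)]
    by (intro borel_measurable_sum borel_measurable_times) auto
  show "\<bar>\<Sum>i\<in>I. w i x * f (\<alpha> i x)\<bar> \<le> real (card I) * c" if "x \<in> space A" for x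
    using mix that f(2) by (rule mixture_law_integrand_bounded)
qed

lemma integral_pair_measure_mixture_fst:
  fixes F :: "_ \<times> _ \<Rightarrow> real"
  assumes P: "prob_space P" and Q: "prob_space Q" and mixP: "mixture_law A I a \<alpha> P"
    and F: "F \<in> borel_measurable (P \<Otimes>\<^sub>M Q)" and Fc: "\<And>z. z \<in> space (P \<Otimes>\<^sub>M Q) \<Longrightarrow> \<bar>F z\<bar> \<le> c"
  shows "(\<integral>z. F z \<partial>(P \<Otimes>\<^sub>M Q)) = (\<integral>x. (\<Sum>i\<in>I. a i x * (\<integral>v. F (\<alpha> i x, v) \<partial>Q)) \<partial>A)"
proof -
  interpret P: prob_space P by fact
  interpret Q: prob_space Q by fact
  have "(\<integral>z. F z \<partial>(P \<Otimes>\<^sub>M Q)) = (\<integral>u. (\<integral>v. F (u, v) \<partial>Q) \<partial>P)"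
    using F Fc by (intro integral_pair_measure_bounded P.finite_measure_axioms Q.finite_measure_axioms)
  also have "\<dots> = (\<integral>x. (\<Sum>i\<in>I. a i x * (\<integral>v. F (\<alpha> i x, v) \<partial>Q)) \<partial>A)"
  proof (rule mixture_law_integral[OF mixP])
    show "(\<lambda>u. \<integral>v. F (u, v) \<partial>Q) \<in> borel_measurable P"
      using F by measurable
    show "\<bar>\<integral>v. F (u, v) \<partial>Q\<bar> \<le> c" if "u \<in> space P" for u
      using that Fc by (intro Q.abs_integral_le_bound measurable_Pair2[OF F]) (auto simp: space_pair_measure)
  qed
  finally show ?thesis .
qed

lemma integral_pair_measure_mixture:
  fixes F :: "_ \<times> _ \<Rightarrow> real"
  assumes A: "prob_space A" and B: "prob_space B" and P: "prob_space P" and Q: "prob_space Q"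
    and mixP: "mixture_law A I a \<alpha> P" and mixQ: "mixture_law B J b \<beta> Q"
    and F: "F \<in> borel_measurable (P \<Otimes>\<^sub>M Q)" and Fc: "\<And>z. z \<in> space (P \<Otimes>\<^sub>M Q) \<Longrightarrow> \<bar>F z\<bar> \<le> c"
  shows "(\<integral>z. F z \<partial>(P \<Otimes>\<^sub>M Q))
    = (\<integral>z. (\<Sum>i\<in>I. a i (fst z) * (\<Sum>j\<in>J. b j (snd z) * F (\<alpha> i (fst z), \<beta> j (snd z)))) \<partial>(A \<Otimes>\<^sub>M B))"
proof -
  interpret A: prob_space A by fact
  interpret B: prob_space B by fact
  define H where "H z = (\<Sum>i\<in>I. a i (fst z) * (\<Sum>j\<in>J. b j (snd z) * F (\<alpha> i (fst z), \<beta> j (snd z))))" for z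
  have F_slice: "(\<lambda>v. F (u, v)) \<in> borel_measurable Q" "\<And>v. v \<in> space Q \<Longrightarrow> \<bar>F (u, v)\<bar> \<le> c"
    if "u \<in> space P" for u
    using that by (auto intro: measurable_Pair2[OF F] Fc simp: space_pair_measure)
  have slice: "(\<integral>v. F (\<alpha> i x, v) \<partial>Q) = (\<integral>y. (\<Sum>j\<in>J. b j y * F (\<alpha> i x, \<beta> j y)) \<partial>B)"
      "integrable B (\<lambda>y. \<Sum>j\<in>J. b j y * F (\<alpha> i x, \<beta> j y))"
    if "i \<in> I" "x \<in> space A" for i x
  proof -
    have "\<alpha> i x \<in> space P"
      using that(2) by (rule measurable_space[OF mixture_law_component_measurable[OF mixP that(1)]])
    from F_slice[OF this]
    show "(\<integral>v. F (\<alpha> i x, v) \<partial>Q) = (\<integral>y. (\<Sum>j\<in>J. b j y * F (\<alpha> i x, \<beta> j y)) \<partial>B)"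
      "integrable B (\<lambda>y. \<Sum>j\<in>J. b j y * F (\<alpha> i x, \<beta> j y))"
      by (auto intro: mixture_law_integral[OF mixQ]
          mixture_law_integrable[OF mixQ B.finite_measure_axioms, of "\<lambda>v. F (\<alpha> i x, v)"])
  qed
  have "(\<integral>z. F z \<partial>(P \<Otimes>\<^sub>M Q)) = (\<integral>x. (\<Sum>i\<in>I. a i x * (\<integral>v. F (\<alpha> i x, v) \<partial>Q)) \<partial>A)"
    by (rule integral_pair_measure_mixture_fst[OF P Q mixP F Fc])
  also have "\<dots> = (\<integral>x. (\<integral>y. H (x, y) \<partial>B) \<partial>A)"
    using slice unfolding H_def
    by (intro Bochner_Integration.integral_cong refl) (simp add: Bochner_Integration.integral_sum)
  also have "\<dots> = (\<integral>z. H z \<partial>(A \<Otimes>\<^sub>M B))"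
  proof (rule integral_pair_measure_bounded[symmetric])
    show "H \<in> borel_measurable (A \<Otimes>\<^sub>M B)"
      unfolding H_def using F mixture_law_weight_measurable[OF mixP] mixture_law_weight_measurable[OF mixQ]
        mixture_law_component_measurable[OF mixP] mixture_law_component_measurable[OF mixQ]
      by measurable
    show "\<bar>H z\<bar> \<le> real (card I) * (real (card J) * c)" if "z \<in> space (A \<Otimes>\<^sub>M B)" for z
      unfolding H_def using that F_slice(2)
      by (intro mixture_law_integrand_bounded[OF mixP] mixture_law_integrand_bounded[OF mixQ])
         (auto simp: space_pair_measure)
  qed simp_all
  finally show ?thesis
    unfolding H_def .
qed

lemma kZ_labelled_sum:
  "(\<Sum>j\<in>I. b j * kZ (x, i) (y j, j)) = (if i \<in> I then b i * k0 x (y i) else 0)" if "finite I"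
  using that by (simp add: kZ_def if_distrib[of "(*) _"] cong: if_cong)

lemma integral_kZ_labelled_mixtures:
  assumes A: "prob_space A" and B: "prob_space B" and P: "prob_space P" and Q: "prob_space Q"
    and sets: "sets P = sets borel_Z" "sets Q = sets borel_Z"
    and mixP: "mixture_law A I a (\<lambda>i x. (u i x, i)) P"
    and mixQ: "mixture_law B I b (\<lambda>i y. (v i y, i)) Q"
  shows "(\<integral>y. kZ (fst y) (snd y) \<partial>(P \<Otimes>\<^sub>M Q))
    = (\<integral>z. (\<Sum>i\<in>I. a i (fst z) * b i (snd z) * k0 (u i (fst z)) (v i (snd z))) \<partial>(A \<Otimes>\<^sub>M B))"
proof -
  have meas: "(\<lambda>y. kZ (fst y) (snd y)) \<in> borel_measurable (P \<Otimes>\<^sub>M Q)"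
    using measurable_kZ by (simp add: measurable_cong_sets[OF sets_pair_measure_cong[OF sets] refl])
  have bound: "\<bar>kZ (fst y) (snd y)\<bar> \<le> 1" for y :: "((real^'d) \<times> nat) \<times> ((real^'d) \<times> nat)"
    by (simp add: kZ_def abs_k0_le_1)
  have "(\<integral>y. kZ (fst y) (snd y) \<partial>(P \<Otimes>\<^sub>M Q))
    = (\<integral>z. (\<Sum>i\<in>I. a i (fst z) * (\<Sum>j\<in>I. b j (snd z) * kZ (u i (fst z), i) (v j (snd z), j))) \<partial>(A \<Otimes>\<^sub>M B))"
    using integral_pair_measure_mixture[OF A B P Q mixP mixQ meas bound] by simp
  also have "\<dots> = (\<integral>z. (\<Sum>i\<in>I. a i (fst z) * b i (snd z) * k0 (u i (fst z)) (v i (snd z))) \<partial>(A \<Otimes>\<^sub>M B))"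
    using mixture_law_finite[OF mixP] by (simp add: kZ_labelled_sum mult.assoc)
  finally show ?thesis .
qed

lemma emeasure_unit_cube: "emeasure lborel (unit_cube :: (real^'d) set) = 1"
proof -
  have cube: "unit_cube = cbox (0::real^'d) 1"
    unfolding unit_cube_def by (auto simp: mem_box_cart)
  show ?thesis
    unfolding cube by (subst emeasure_lborel_cbox) (auto simp: Basis_vec_def inner_axis intro!: prod.neutral)
qed

lemma prob_space_unif_cube: "prob_space (unif_cube :: (real^'d) measure)"
  unfolding unif_cube_def by (rule prob_space_uniform_measure) (auto simp: emeasure_unit_cube)

lemma sets_unif_cube [measurable_cong]: "sets (unif_cube :: (real^'d) measure) = sets borel"
  unfolding unif_cube_def by simp

lemma integrable_k0_unif_cube:
  "integrable (unif_cube \<Otimes>\<^sub>M unif_cube) (\<lambda>z. k0 (fst z) (snd z :: real^'d))"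
proof -
  interpret U: prob_space "unif_cube :: (real^'d) measure"
    by (rule prob_space_unif_cube)
  interpret UU: pair_prob_space "unif_cube :: (real^'d) measure" "unif_cube :: (real^'d) measure" ..
  show ?thesis
    by (rule UU.integrable_bounded[where c=1]) (auto simp: abs_k0_le_1)
qed

lemma prob_space_uniform_count_space:
  "finite S \<Longrightarrow> S \<noteq> {} \<Longrightarrow> prob_space (uniform_measure (count_space UNIV) S)"
  by (rule prob_space_uniform_measure) auto

lemma integral_uniform_count_space:
  fixes f :: "'a \<Rightarrow> real"
  assumes "finite S" "S \<noteq> {}"
  shows "(\<integral>i. f i \<partial>uniform_measure (count_space UNIV) S) = (\<Sum>i\<in>S. f i) / card S"
proof -
  have "0 < card S"
    using assms by (simp add: card_gt_0_iff)
  then have "uniform_measure (count_space UNIV) S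
      = density (count_space UNIV) (\<lambda>i. ennreal (indicator S i / card S))"
    unfolding uniform_measure_def using assms
    by (intro density_cong) (auto simp: indicator_def divide_ennreal[symmetric] ennreal_of_nat_eq_real_of_nat)
  then have "(\<integral>i. f i \<partial>uniform_measure (count_space UNIV) S)
      = (\<integral>i. indicator S i / card S * f i \<partial>count_space UNIV)"
    by (simp add: integral_density)
  also have "\<dots> = (\<Sum>i\<in>S. indicator S i / card S * f i)"
    using assms(1) by (subst lebesgue_integral_count_space_finite_support)
      (auto intro: finite_subset[of _ S] intro!: sum.mono_neutral_left simp: indicator_def)
  also have "\<dots> = (\<Sum>i\<in>S. f i) / card S"
    by (simp add: sum_divide_distrib)
  finally show ?thesis .
qed

lemma prob_space_unif_Z: "1 \<le> n \<Longrightarrow> prob_space (unif_Z n :: ((real^'d) \<times> nat) measure)"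
  unfolding unif_Z_def
  by (intro prob_space_pair prob_space_unif_cube prob_space_uniform_count_space) auto

lemma sets_unif_Z: "sets (unif_Z n :: ((real^'d) \<times> nat) measure) = sets borel_Z"
  unfolding unif_Z_def by (intro sets_pair_measure_cong sets_unif_cube) simp

lemma mixture_law_unif_Z:
  assumes "1 \<le> n"
  shows "mixture_law unif_cube {1..n} (\<lambda>_ _. 1 / real n) (\<lambda>i w. (w, i)) (unif_Z n :: ((real^'d) \<times> nat) measure)"
proof (rule mixture_lawI)
  let ?L = "uniform_measure (count_space UNIV) {1..n}"
  interpret U: prob_space "unif_cube :: (real^'d) measure" by (rule prob_space_unif_cube)
  interpret L: prob_space ?L using assms by (intro prob_space_uniform_count_space) auto
  show "(\<lambda>w. (w, i)) \<in> measurable unif_cube (unif_Z n)" for i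
    unfolding unif_Z_def by measurable
  fix f :: "(real^'d) \<times> nat \<Rightarrow> real" and c
  assume "f \<in> borel_measurable (unif_Z n)" "\<And>z. z \<in> space (unif_Z n) \<Longrightarrow> \<bar>f z\<bar> \<le> c"
  then have "(\<integral>z. f z \<partial>unif_Z n) = (\<integral>w. (\<integral>l. f (w, l) \<partial>?L) \<partial>unif_cube)"
    unfolding unif_Z_def
    by (intro integral_pair_measure_bounded U.finite_measure_axioms L.finite_measure_axioms)
  also have "\<dots> = (\<integral>w. (\<Sum>l\<in>{1..n}. 1 / real n * f (w, l)) \<partial>unif_cube)"
    using assms by (simp add: integral_uniform_count_space sum_divide_distrib)
  finally show "(\<integral>z. f z \<partial>unif_Z n) = (\<integral>w. (\<Sum>l\<in>{1..n}. 1 / real n * f (w, l)) \<partial>unif_cube)" .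
qed (use assms in auto)

locale soft_encoder = prob_space M for M :: "'a measure" +
  fixes n :: nat and q :: "nat \<Rightarrow> 'a \<Rightarrow> real" and \<phi> :: "nat \<Rightarrow> 'a \<Rightarrow> real^'d"
  assumes measurable_\<phi> [measurable]: "\<And>i. i \<in> {1..n} \<Longrightarrow> \<phi> i \<in> borel_measurable M"
    and measurable_q [measurable]: "\<And>i. i \<in> {1..n} \<Longrightarrow> q i \<in> borel_measurable M"
    and q_bounds: "\<And>i x. i \<in> {1..n} \<Longrightarrow> x \<in> space M \<Longrightarrow> 0 \<le> q i x \<and> q i x \<le> 1"
    and q_sum: "\<And>x. x \<in> space M \<Longrightarrow> (\<Sum>i\<in>{1..n}. q i x) = 1"
begin

(* A constant rather than count_space {1..n} itself, which the simplifier would rewrite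
   to count_space {Suc 0..n} and thereby break the measurability rules. *)
definition labels :: "nat measure" where
  "labels = count_space {1..n}"

lemma space_labels [simp]: "space labels = {1..n}"
  by (simp add: labels_def)

definition joint_law :: "('a \<times> nat) measure" where
  "joint_law = density (M \<Otimes>\<^sub>M labels) (\<lambda>z. ennreal (q (snd z) (fst z)))"

definition encode :: "'a \<times> nat \<Rightarrow> (real^'d) \<times> nat" where
  "encode = (\<lambda>(x, i). (\<phi> i x, i))"

lemma measurable_encode: "encode \<in> measurable (M \<Otimes>\<^sub>M labels) borel_Z"
  unfolding encode_def case_prod_beta labels_def
  by (rule measurable_compose_countable'[where f="\<lambda>i z. (\<phi> i (fst z), i)" and g=snd and I="{1..n}"])
     (auto intro!: measurable_Pair measurable_compose[OF measurable_fst measurable_\<phi>])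

lemma measurable_joint_weight [measurable]:
  "(\<lambda>z. q (snd z) (fst z)) \<in> borel_measurable (M \<Otimes>\<^sub>M labels)"
  unfolding labels_def
  by (rule measurable_compose_countable'[where f="\<lambda>i z. q i (fst z)" and g=snd and I="{1..n}"])
     (auto intro!: measurable_compose[OF measurable_fst measurable_q])

lemma emeasure_distr_encode:
  assumes A: "A \<in> sets borel_Z"
  shows "emeasure (distr joint_law borel_Z encode) A
    = (\<integral>\<^sup>+x. (\<Sum>i\<in>{1..n}. ennreal (q i x) * indicator A (\<phi> i x, i)) \<partial>M)"
proof -
  interpret L: finite_measure labels
    unfolding labels_def by (rule finite_measure_count_space) simp
  have [measurable]: "encode -` A \<inter> space (M \<Otimes>\<^sub>M labels) \<in> sets (M \<Otimes>\<^sub>M labels)"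
    using measurable_encode A by (rule measurable_sets)
  have "emeasure (distr joint_law borel_Z encode) A
      = emeasure joint_law (encode -` A \<inter> space (M \<Otimes>\<^sub>M labels))"
    using measurable_encode A by (simp add: joint_law_def emeasure_distr)
  also have "\<dots> = (\<integral>\<^sup>+z. ennreal (q (snd z) (fst z))
           * indicator (encode -` A \<inter> space (M \<Otimes>\<^sub>M labels)) z \<partial>(M \<Otimes>\<^sub>M labels))"
    unfolding joint_law_def by (rule emeasure_density) measurable
  also have "\<dots> = (\<integral>\<^sup>+x. (\<integral>\<^sup>+i. ennreal (q i x)
           * indicator (encode -` A \<inter> space (M \<Otimes>\<^sub>M labels)) (x, i) \<partial>labels) \<partial>M)"
    by (subst L.nn_integral_fst[symmetric]) auto
  also have "\<dots> = (\<integral>\<^sup>+x. (\<Sum>i\<in>{1..n}. ennreal (q i x) * indicator A (\<phi> i x, i)) \<partial>M)"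
    by (intro nn_integral_cong)
       (auto simp: labels_def nn_integral_count_space_finite space_pair_measure encode_def indicator_def
         intro!: sum.cong)
  finally show ?thesis .
qed

lemma p_Z_eq_distr: "p_Z M n q \<phi> = distr joint_law borel_Z encode"
proof -
  have "distr joint_law borel_Z encode
      = measure_of UNIV (sets borel_Z) (emeasure (distr joint_law borel_Z encode))"
    using measure_of_of_measure[of "distr joint_law borel_Z encode"] by (simp add: space_pair_measure)
  also have "\<dots> = p_Z M n q \<phi>"
    unfolding p_Z_def using emeasure_distr_encode
    by (intro measure_of_eq) (auto simp: sets.sigma_sets_eq[of borel_Z, simplified space_pair_measure, simplified])
  finally show ?thesis ..
qed

lemma sets_p_Z [measurable_cong]: "sets (p_Z M n q \<phi>) = sets borel_Z"
  by (simp add: p_Z_eq_distr)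

lemma prob_space_p_Z: "prob_space (p_Z M n q \<phi>)"
proof (rule prob_spaceI)
  have UNIV: "UNIV \<in> sets borel_Z"
    using sets.top[of borel_Z] by (simp add: space_pair_measure)
  have "emeasure (p_Z M n q \<phi>) UNIV = (\<integral>\<^sup>+x. (\<Sum>i\<in>{1..n}. ennreal (q i x)) \<partial>M)"
    using emeasure_distr_encode[OF UNIV] by (simp add: p_Z_eq_distr)
  also have "\<dots> = (\<integral>\<^sup>+x. 1 \<partial>M)"
  proof (intro nn_integral_cong)
    fix x assume "x \<in> space M"
    then show "(\<Sum>i\<in>{1..n}. ennreal (q i x)) = 1"
      using q_bounds q_sum by (subst sum_ennreal) auto
  qed
  finally show "emeasure (p_Z M n q \<phi>) (space (p_Z M n q \<phi>)) = 1"
    by (simp add: p_Z_eq_distr space_pair_measure emeasure_space_1)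
qed

lemma integral_p_Z:
  fixes f :: "(real^'d) \<times> nat \<Rightarrow> real"
  assumes f[measurable]: "f \<in> borel_measurable borel_Z" and bound: "\<And>z. \<bar>f z\<bar> \<le> c"
  shows "(\<integral>z. f z \<partial>p_Z M n q \<phi>) = (\<integral>x. (\<Sum>i\<in>{1..n}. q i x * f (\<phi> i x, i)) \<partial>M)"
proof -
  interpret L: finite_measure labels
    unfolding labels_def by (rule finite_measure_count_space) simp
  have [measurable]: "(\<lambda>z. f (encode z)) \<in> borel_measurable (M \<Otimes>\<^sub>M labels)"
    using measurable_encode by measurable
  have "(\<integral>z. f z \<partial>p_Z M n q \<phi>) = (\<integral>z. f (encode z) \<partial>joint_law)"
    unfolding p_Z_eq_distr using measurable_encode by (intro integral_distr) (auto simp: joint_law_def)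
  also have "\<dots> = (\<integral>z. q (snd z) (fst z) * f (encode z) \<partial>(M \<Otimes>\<^sub>M labels))"
    unfolding joint_law_def by (subst integral_density) (auto simp: space_pair_measure q_bounds)
  also have "\<dots> = (\<integral>x. (\<integral>i. q i x * f (encode (x, i)) \<partial>labels) \<partial>M)"
  proof -
    have "\<bar>q (snd z) (fst z) * f (encode z)\<bar> \<le> c" if "z \<in> space (M \<Otimes>\<^sub>M labels)" for z
      using that q_bounds[of "snd z" "fst z"] bound[of "encode z"]
      by (auto simp: space_pair_measure abs_mult intro: order_trans[OF mult_left_le_one_le])
    from integral_pair_measure_bounded[OF finite_measure_axioms L.finite_measure_axioms _ this]
    show ?thesis by simp
  qed
  also have "\<dots> = (\<integral>x. (\<Sum>i\<in>{1..n}. q i x * f (\<phi> i x, i)) \<partial>M)"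
    by (simp add: labels_def lebesgue_integral_count_space_finite encode_def)
  finally show ?thesis .
qed

lemma mixture_law_p_Z: "mixture_law M {1..n} q (\<lambda>i x. (\<phi> i x, i)) (p_Z M n q \<phi>)"
proof (rule mixture_lawI)
  fix f :: "(real^'d) \<times> nat \<Rightarrow> real" and c
  assume "f \<in> borel_measurable (p_Z M n q \<phi>)" "\<And>z. z \<in> space (p_Z M n q \<phi>) \<Longrightarrow> \<bar>f z\<bar> \<le> c"
  then show "(\<integral>z. f z \<partial>p_Z M n q \<phi>) = (\<integral>x. (\<Sum>i\<in>{1..n}. q i x * f (\<phi> i x, i)) \<partial>M)"
    by (intro integral_p_Z) (auto simp: measurable_cong_sets[OF sets_p_Z refl] p_Z_eq_distr space_pair_measure)
qed (auto simp: measurable_cong_sets[OF refl sets_p_Z] q_bounds)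

definition data_kernel :: "'a \<times> 'a \<Rightarrow> real" where
  "data_kernel z = (\<Sum>i\<in>{1..n}. q i (fst z) * q i (snd z) * k0 (\<phi> i (fst z)) (\<phi> i (snd z)))"

definition cross_kernel :: "'a \<times> (real^'d) \<Rightarrow> real" where
  "cross_kernel z = (\<Sum>i\<in>{1..n}. q i (fst z) * k0 (\<phi> i (fst z)) (snd z))"

lemma MMD2_p_Z_unif_Z:
  assumes n: "1 \<le> n"
  shows "MMD2 kZ (p_Z M n q \<phi>) (unif_Z n) =
      (\<integral>z. data_kernel z \<partial>(M \<Otimes>\<^sub>M M))
    - 2 / real n * (\<integral>z. cross_kernel z \<partial>(M \<Otimes>\<^sub>M unif_cube))
    + 1 / real n * (\<integral>z. k0 (fst z) (snd z) \<partial>(unif_cube \<Otimes>\<^sub>M (unif_cube :: (real^'d) measure)))"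
proof -
  note p = prob_space_axioms prob_space_p_Z sets_p_Z mixture_law_p_Z
  note U = prob_space_unif_cube prob_space_unif_Z[OF n] sets_unif_Z mixture_law_unif_Z[OF n]
  have "(\<integral>y. kZ (fst y) (snd y) \<partial>(p_Z M n q \<phi> \<Otimes>\<^sub>M unif_Z n))
      = (\<integral>z. 1 / real n * cross_kernel z \<partial>(M \<Otimes>\<^sub>M unif_cube))"
    using integral_kZ_labelled_mixtures[OF p(1) U(1) p(2) U(2) p(3) U(3) p(4) U(4)]
    by (simp add: cross_kernel_def sum_distrib_left mult_ac)
  moreover have "(\<integral>y. kZ (fst y) (snd y) \<partial>(unif_Z n \<Otimes>\<^sub>M (unif_Z n :: ((real^'d) \<times> nat) measure)))
      = (\<integral>z. 1 / real n * k0 (fst z) (snd z) \<partial>(unif_cube \<Otimes>\<^sub>M (unif_cube :: (real^'d) measure)))"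
    using integral_kZ_labelled_mixtures[OF U(1) U(1) U(2) U(2) U(3) U(3) U(4) U(4)] n
    by (simp add: power2_eq_square)
  ultimately show ?thesis
    unfolding MMD2_def integral_kZ_labelled_mixtures[OF p(1) p(1) p(2) p(2) p(3) p(3) p(4) p(4)]
    by (simp add: data_kernel_def)
qed

lemma abs_q_average_le:
  assumes "x \<in> space M" "\<And>i. i \<in> {1..n} \<Longrightarrow> \<bar>g i\<bar> \<le> 1"
  shows "\<bar>\<Sum>i\<in>{1..n}. q i x * g i\<bar> \<le> 1"
proof -
  have "\<bar>\<Sum>i\<in>{1..n}. q i x * g i\<bar> \<le> (\<Sum>i\<in>{1..n}. q i x)"
    using assms q_bounds
    by (intro order_trans[OF sum_abs sum_mono]) (auto simp: abs_mult intro: mult_left_le)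
  then show ?thesis
    using q_sum[OF assms(1)] by simp
qed

lemma integrable_q_average:
  assumes "prob_space B"
    and "\<And>i. i \<in> {1..n} \<Longrightarrow> g i \<in> borel_measurable (M \<Otimes>\<^sub>M B)"
    and "\<And>i z. i \<in> {1..n} \<Longrightarrow> z \<in> space (M \<Otimes>\<^sub>M B) \<Longrightarrow> \<bar>g i z\<bar> \<le> 1"
  shows "integrable (M \<Otimes>\<^sub>M B) (\<lambda>z. \<Sum>i\<in>{1..n}. q i (fst z) * g i z)"
proof -
  interpret B: prob_space B by fact
  interpret MB: pair_prob_space M B ..
  show ?thesis
  proof (rule MB.integrable_bounded)
    show "(\<lambda>z. \<Sum>i\<in>{1..n}. q i (fst z) * g i z) \<in> borel_measurable (M \<Otimes>\<^sub>M B)"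
      using assms(2) by measurable
    show "\<bar>\<Sum>i\<in>{1..n}. q i (fst z) * g i z\<bar> \<le> 1" if "z \<in> space (M \<Otimes>\<^sub>M B)" for z
      using that assms(3) by (intro abs_q_average_le) (auto simp: space_pair_measure)
  qed
qed

lemma integrable_data_kernel: "integrable (M \<Otimes>\<^sub>M M) data_kernel"
  unfolding data_kernel_def mult.assoc using q_bounds
  by (intro integrable_q_average prob_space_axioms)
     (auto simp: space_pair_measure abs_mult abs_k0_le_1 intro!: mult_le_one)

lemma integrable_cross_kernel: "integrable (M \<Otimes>\<^sub>M unif_cube) cross_kernel"
  unfolding cross_kernel_def
  by (intro integrable_q_average prob_space_unif_cube) (auto simp: abs_k0_le_1)

lemma expectation_ell_Z:
  assumes n: "1 \<le> n" and N: "2 \<le> N"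
  shows "(\<integral>s. ell_Z n N q \<phi> (fst s) (snd s) \<partial>((\<Pi>\<^sub>M j\<in>{1..N}. M) \<Otimes>\<^sub>M (\<Pi>\<^sub>M j\<in>{1..N}. unif_cube))) =
      (\<integral>z. data_kernel z \<partial>(M \<Otimes>\<^sub>M M))
    - 2 / real n * (\<integral>z. cross_kernel z \<partial>(M \<Otimes>\<^sub>M unif_cube))
    + 1 / real n * (\<integral>z. k0 (fst z) (snd z) \<partial>(unif_cube \<Otimes>\<^sub>M (unif_cube :: (real^'d) measure)))"
    (is "(\<integral>s. _ \<partial>(?X \<Otimes>\<^sub>M ?W)) = ?rhs")
proof -
  interpret U: prob_space "unif_cube :: (real^'d) measure" by (rule prob_space_unif_cube)
  interpret X: prob_space ?X by (rule prob_space_PiM) (rule prob_space_axioms)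
  interpret W: prob_space ?W by (rule prob_space_PiM) (rule U.prob_space_axioms)
  note offdiag_data = integral_PiM_offdiag_sum[OF prob_space_axioms finite_atLeastAtMost[of 1 N] integrable_data_kernel]
  note offdiag_unif = integral_PiM_offdiag_sum[OF U.prob_space_axioms finite_atLeastAtMost[of 1 N] integrable_k0_unif_cube]
  note cross = integral_PiM_PiM_cross_sum[OF prob_space_axioms U.prob_space_axioms
      finite_atLeastAtMost[of 1 N] finite_atLeastAtMost[of 1 N] integrable_cross_kernel]
  note sums = W.integral_pair_fst[OF offdiag_data(1)] cross(1)
    X.integral_pair_snd[OF W.prob_space_axioms offdiag_unif(1)]
  have "ell_Z n N q \<phi> (fst s) (snd s) =
      1 / (real N * (real N - 1)) * (\<Sum>j\<in>{1..N}. \<Sum>k\<in>{1..N}-{j}. data_kernel (fst s j, fst s k))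
    - 2 / (real n * real N ^ 2) * (\<Sum>j\<in>{1..N}. \<Sum>k\<in>{1..N}. cross_kernel (fst s j, snd s k))
    + 1 / (real n * real N * (real N - 1)) * (\<Sum>j\<in>{1..N}. \<Sum>k\<in>{1..N}-{j}. k0 (snd s j) (snd s k))" for s
    by (simp add: ell_Z_def data_kernel_def cross_kernel_def)
  then have "(\<integral>s. ell_Z n N q \<phi> (fst s) (snd s) \<partial>(?X \<Otimes>\<^sub>M ?W)) =
      1 / (real N * (real N - 1)) * (real N * (real N - 1) * (\<integral>z. data_kernel z \<partial>(M \<Otimes>\<^sub>M M)))
    - 2 / (real n * real N ^ 2) * (real N * real N * (\<integral>z. cross_kernel z \<partial>(M \<Otimes>\<^sub>M unif_cube)))
    + 1 / (real n * real N * (real N - 1))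
        * (real N * (real N - 1) * (\<integral>z. k0 (fst z) (snd z) \<partial>(unif_cube \<Otimes>\<^sub>M (unif_cube :: (real^'d) measure))))"
    using sums W.integral_pair_fst(2)[OF offdiag_data(1)] offdiag_data(2) cross(2)
      X.integral_pair_snd(2)[OF W.prob_space_axioms offdiag_unif(1)] offdiag_unif(2)
    by simp
  also have "\<dots> = ?rhs"
  proof -
    have "real N * (real N - 1) \<noteq> 0"
      using N by simp
    then show ?thesis
      by (simp add: power2_eq_square)
  qed
  finally show ?thesis .
qed

end

theorem proposition1:
  fixes M :: "'a measure"
    and n N :: nat
    and q :: "nat \<Rightarrow> 'a \<Rightarrow> real"
    and \<phi> :: "nat \<Rightarrow> 'a \<Rightarrow> real^'d"
  assumes "prob_space M"
    and "n \<ge> 1"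
    and "N \<ge> 2"
    and "\<And>i. i \<in> {1..n} \<Longrightarrow> \<phi> i \<in> borel_measurable M"
    and "\<And>i. i \<in> {1..n} \<Longrightarrow> q i \<in> borel_measurable M"
    and "\<And>i x. i \<in> {1..n} \<Longrightarrow> x \<in> space M \<Longrightarrow> \<phi> i x \<in> unit_cube"
    and "\<And>i x. i \<in> {1..n} \<Longrightarrow> x \<in> space M \<Longrightarrow> 0 \<le> q i x \<and> q i x \<le> 1"
    and "\<And>x. x \<in> space M \<Longrightarrow> (\<Sum>i\<in>{1..n}. q i x) = 1"
  shows "(\<integral>s. ell_Z n N q \<phi> (fst s) (snd s)
            \<partial>((\<Pi>\<^sub>M j\<in>{1..N}. M) \<Otimes>\<^sub>M (\<Pi>\<^sub>M j\<in>{1..N}. unif_cube)))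
         = MMD2 kZ (p_Z M n q \<phi>) (unif_Z n)"
proof -
  interpret soft_encoder M n q \<phi>
    using assms(1,4,5,7,8) by (intro soft_encoder.intro soft_encoder_axioms.intro)
  show ?thesis
    using expectation_ell_Z[OF assms(2,3)] MMD2_p_Z_unif_Z[OF assms(2)] by simp
qed

end
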